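(* Let $K$ be a field of characteristic zero, $f(x,y)=\sum_{m,n\ge0}f_{m,n}\frac{x^my^n}{m!\,n!}\in K[[x,y]]$ with $f_{0,0}=0$, $f_{0,1}\ne0$, and $\varphi_n(x)=\sum_{m\ge0}f_{m,n}\frac{x^m}{m!}$. Then the unique $y(x)\in xK[[x]]$ with $f(x,y(x))=0$ satisfies $$y(x)=\sum_{k\ge1}(-1)^k A_{k,1}(\varphi_1(x),\dots,\varphi_k(x))\frac{\varphi_0(x)^k}{k!} =\sum_{k\ge1}\sum_{n\ge k}(-1)^k A_{k,1}(\varphi_1(x),\dots,\varphi_k(x))\,B_{n,k}(f_{1,0},\dots,f_{n-k+1,0})\frac{x^n}{n!},$$ the sums converging in the $x$-adic topology of $K[[x]]$.
   Context: $B_{n,k}$ denotes the partial (exponential) Bell polynomial, defined by $\frac{1}{k!}\big(\sum_{i\ge1}X_i\frac{t^i}{i!}\big)^k=\sum_{n\ge k}B_{n,k}(X_1,\dots,X_{n-k+1})\frac{t^n}{n!}$. $A_{n,1}(X_1,\dots,X_n)$ (a polynomial in $X_1^{-1},X_1,\dots,X_n$) is the $n$-th Taylor coefficient (coefficient of $y^n/n!$) of the compositional inverse of $\sum_{n\ge1}X_n\frac{y^n}{n!}$; explicitly $A_{n,1}=X_1^{-(2n-1)}\sum \frac{(-1)^{n-1-r_1}(2n-2-r_1)!}{r_2!\cdots r_n!\,(2!)^{r_2}\cdots(n!)^{r_n}}X_1^{r_1}X_2^{r_2}\cdots X_n^{r_n}$, summed over nonnegative integer sequences $(r_1,\dots,r_n)$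 with $\sum r_i=n-1$, $\sum i r_i=2n-2$. Since $\varphi_1(0)=f_{0,1}\neq0$, $A_{k,1}(\varphi_1,\dots,\varphi_k)\in K[[x]]$ is well defined. *)

theory Defs
  imports "HOL-Computational_Algebra.Formal_Power_Series"
begin

definition bellB :: "nat \<Rightarrow> nat \<Rightarrow> (nat \<Rightarrow> 'a::field_char_0) \<Rightarrow> 'a" where
  "bellB n k x = fact n * fps_nth
     (fps_const (1 / fact k) * (Abs_fps (\<lambda>i. if i = 0 then 0 else x i / fact i)) ^ k) n"

definition A_idx :: "nat \<Rightarrow> (nat \<Rightarrow> nat) set" where
  "A_idx n = {r. (\<forall>i. i \<notin> {1..n} \<longrightarrow> r i = 0) \<and>
                 (\<Sum>i=1..n. r i) = n - 1 \<and> (\<Sum>i=1..n. i * r i) = 2 * n - 2}"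

text \<open>A_{n,1}(X_1,...,X_n) (n-th Taylor coefficient of the compositional inverse of
  sum X_n y^n/n!), via the explicit formula, evaluated at power series X 1, ..., X n
  over K (X 1 is inverted in K[[x]], which requires X 1 to have nonzero constant term).\<close>
definition A1 :: "nat \<Rightarrow> (nat \<Rightarrow> 'a::field_char_0 fps) \<Rightarrow> 'a fps" where
  "A1 n X = inverse (X 1) ^ (2 * n - 1) *
     (\<Sum>r\<in>A_idx n.
        fps_const ((-1) ^ (n - 1 - r 1) * fact (2 * n - 2 - r 1) /
                   (\<Prod>i=2..n. fact (r i) * fact i ^ r i)) *
        (\<Prod>i=1..n. X i ^ r i))"

definition phi :: "(nat \<Rightarrow> nat \<Rightarrow> 'a::field_char_0) \<Rightarrow> nat \<Rightarrow> 'a fps" where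
  "phi f n = Abs_fps (\<lambda>m. f m n / fact m)"

text \<open>f(x, y(x)) = sum_n phi_n(x) y(x)^n/n! for y with zero constant term
  (x-adically convergent; coefficient N only involves n <= N).\<close>
definition subst2 :: "(nat \<Rightarrow> nat \<Rightarrow> 'a::field_char_0) \<Rightarrow> 'a fps \<Rightarrow> 'a fps" where
  "subst2 f y = Abs_fps (\<lambda>N. \<Sum>n\<le>N. fps_nth (phi f n * fps_const (1 / fact n) * y ^ n) N)"

end

(*
  Write f(x, y) = phi_0 + G(y) with G(y) = sum_{n >= 1} phi_n y^n / n!, a series in y over K[[x]]
  whose linear coefficient phi_1 has the nonzero constant term f_{0,1}. By Lagrange inversion,
  n [y^n] G^{-1} = [y^{n-1}] (G / y)^{-n}, and expanding the right-hand side binomially and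
  multinomially gives exactly the explicit formula for A_{n,1}(phi_1, ..., phi_n); so
  G^{-1}(y) = sum_k A_{k,1} y^k / k!. As K[[x]] is not a field, this is done over the Laurent
  series field K((x)). Since f_{0,0} = 0, the series -phi_0 has no constant term and can be
  substituted for y, and y(x) = G^{-1}(-phi_0) solves G(y) = -phi_0. Any two solutions agree,
  since at the lowest order of their difference the equations differ by f_{0,1} times its
  coefficient. Expanding phi_0^k / k! by the generating function of the Bell polynomials gives
  the second form of the series.
*)
theory Submission
  imports Defs "HOL-Computational_Algebra.Formal_Laurent_Series"
begin

section \<open>Lagrange inversion\<close>

lemma fps_mult_nth_cong:
  fixes W A B :: "'a::comm_semiring_1 fps"
  assumes "\<And>i. i \<le> m \<Longrightarrow> A $ i = B $ i"
  shows "(W * A) $ m = (W * B) $ m"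
  using assms by (auto simp: fps_mult_nth intro!: sum.cong)

lemma fps_power_nth_cong:
  fixes A B :: "'a::comm_semiring_1 fps"
  assumes "\<And>i. i \<le> m \<Longrightarrow> A $ i = B $ i" and "m' \<le> m"
  shows "(A ^ j) $ m' = (B ^ j) $ m'"
  using assms(2)
proof (induction j arbitrary: m')
  case 0
  then show ?case by simp
next
  case (Suc j)
  show ?case unfolding power_Suc fps_mult_nth
    using Suc assms(1) by (intro sum.cong) auto
qed

lemma fps_compose_nth_truncated:
  fixes D G :: "'a::comm_ring_1 fps"
  assumes "G $ 0 = 0" and "i \<le> m"
  shows "(D oo G) $ i = (\<Sum>k\<le>m. fps_const (D $ k) * G ^ k) $ i"
proof -
  have "(D oo G) $ i = (\<Sum>k=0..i. D $ k * (G ^ k) $ i)"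
    by (simp add: fps_compose_nth)
  also have "\<dots> = (\<Sum>k\<le>m. D $ k * (G ^ k) $ i)"
    by (rule sum.mono_neutral_left) (use startsby_zero_power_prefix[OF assms(1)] assms(2) in auto)
  also have "\<dots> = (\<Sum>k\<le>m. fps_const (D $ k) * G ^ k) $ i"
    by (simp add: fps_sum_nth)
  finally show ?thesis .
qed

text \<open>The formal residue of \<open>(X\<psi>)\<^sup>-\<^sup>j d(X\<psi>)\<close> is \<open>[j = 1]\<close>: we have
  \<open>\<psi>\<^sup>-\<^sup>j (X\<psi>)' = \<psi>\<^sup>1\<^sup>-\<^sup>j + X \<psi>\<^sup>-\<^sup>j \<psi>'\<close>, and for \<open>j \<ge> 2\<close> the second summand is
  \<open>X (\<psi>\<^sup>1\<^sup>-\<^sup>j)' / (1 - j)\<close>, whose coefficient of \<open>x\<^sup>j\<^sup>-\<^sup>1\<close> cancels that of the first.\<close>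
lemma residue_inverse_power_deriv:
  fixes \<psi> :: "'a::field_char_0 fps"
  assumes \<psi>0: "\<psi> $ 0 \<noteq> 0" and j: "j \<ge> 1"
  shows "(inverse \<psi> ^ j * fps_deriv (fps_X * \<psi>)) $ (j - 1) = (if j = 1 then 1 else 0)"
proof -
  define u where "u = inverse \<psi>"
  have split: "u ^ j * fps_deriv (fps_X * \<psi>) = u ^ (j - 1) + fps_X * (u ^ j * fps_deriv \<psi>)"
  proof -
    have "u ^ j = u ^ (j - 1) * u"
      using j by (metis Suc_diff_le diff_Suc_1 power_Suc2)
    then have "u ^ j * \<psi> = u ^ (j - 1)"
      using inverse_mult_eq_1[OF \<psi>0] by (simp add: u_def mult.assoc)
    then show ?thesis by (simp add: algebra_simps)
  qed
  show ?thesis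
  proof (cases "j = 1")
    case True
    then show ?thesis using split by (simp add: u_def)
  next
    case False
    then obtain m where m: "j = Suc (Suc m)"
      using j by (metis One_nat_def Suc_pred' less_eq_Suc_le not0_implies_Suc)
    define W where "W = u ^ Suc m"
    define Z where "Z = u ^ j * fps_deriv \<psi>"
    have du: "fps_deriv u = - fps_deriv \<psi> * u\<^sup>2"
      unfolding u_def using \<psi>0 by (rule fps_inverse_deriv)
    have "fps_deriv W = - (of_nat (Suc m) * Z)"
      unfolding W_def Z_def fps_deriv_power' du m by (simp add: power2_eq_square algebra_simps)
    then have "(fps_deriv W) $ m = - (of_nat (Suc m) * Z $ m)"
      by (metis fps_mult_left_const_nth fps_neg_nth fps_of_nat)
    then have "of_nat (Suc m) * (W $ Suc m + Z $ m) = 0"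
      by (simp add: distrib_left del: of_nat_Suc)
    then have "W $ Suc m + Z $ m = 0"
      by (simp del: of_nat_Suc)
    moreover have "(u ^ j * fps_deriv (fps_X * \<psi>)) $ (j - 1) = W $ Suc m + Z $ m"
      unfolding split by (simp add: m W_def Z_def)
    ultimately show ?thesis using False by (simp add: u_def)
  qed
qed

lemma residue_inverse_power_deriv_mult_power:
  fixes \<psi> :: "'a::field_char_0 fps"
  assumes \<psi>0: "\<psi> $ 0 \<noteq> 0" and kn: "k < n"
  shows "(inverse \<psi> ^ n * fps_deriv (fps_X * \<psi>) * (fps_X * \<psi>) ^ k) $ (n - 1)
           = (if k = n - 1 then 1 else 0)"
proof -
  define j where "j = n - k"
  define D where "D = fps_deriv (fps_X * \<psi>)"
  have j: "j \<ge> 1" and nj: "n = j + k"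
    using kn by (auto simp: j_def)
  have "inverse \<psi> ^ k * \<psi> ^ k = 1"
    using inverse_mult_eq_1[OF \<psi>0] by (metis power_mult_distrib power_one)
  then have cancel: "inverse \<psi> ^ n * (fps_X * \<psi>) ^ k = fps_X ^ k * inverse \<psi> ^ j"
    by (simp add: nj power_add power_mult_distrib mult_ac)
  have regroup: "inverse \<psi> ^ n * D * (fps_X * \<psi>) ^ k = (inverse \<psi> ^ n * (fps_X * \<psi>) ^ k) * D"
    by (simp only: mult_ac)
  have "(inverse \<psi> ^ n * D * (fps_X * \<psi>) ^ k) $ (n - 1) = (inverse \<psi> ^ j * D) $ (j - 1)"
    unfolding regroup cancel using kn
    by (simp only: mult.assoc fps_X_power_mult_nth) (simp add: j_def)
  also have "\<dots> = (if j = 1 then 1 else 0)"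
    unfolding D_def by (rule residue_inverse_power_deriv[OF \<psi>0 j])
  also have "(j = 1) = (k = n - 1)"
    using kn unfolding j_def by linarith
  finally show ?thesis
    by (simp only: D_def)
qed

text \<open>Differentiating \<open>H(X\<psi>) = X\<close> for \<open>H = (X\<psi>)\<^sup>-\<^sup>1\<close> gives \<open>H'(X\<psi>) (X\<psi>)' = 1\<close>; after
  multiplying by \<open>\<psi>\<^sup>-\<^sup>n\<close>, the residue computation singles out the term \<open>H' $ (n - 1)\<close>.\<close>
lemma fps_inv_nth_Lagrange:
  fixes \<psi> :: "'a::field_char_0 fps"
  assumes \<psi>0: "\<psi> $ 0 \<noteq> 0" and n: "n \<ge> 1"
  shows "of_nat n * fps_inv (fps_X * \<psi>) $ n = (inverse \<psi> ^ n) $ (n - 1)"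
proof -
  define G where "G = fps_X * \<psi>"
  have G0: "G $ 0 = 0" and G1: "G $ 1 \<noteq> 0"
    using \<psi>0 by (simp_all add: G_def)
  define D where "D = fps_deriv (fps_inv G)"
  have "fps_deriv (fps_inv G oo G) = (D oo G) * fps_deriv G"
    unfolding D_def by (rule fps_compose_deriv[OF G0])
  then have DG: "(D oo G) * fps_deriv G = 1"
    using fps_inv[OF G0 G1] by simp
  define V where "V = inverse \<psi> ^ n"
  have "V $ (n - 1) = (V * fps_deriv G * (D oo G)) $ (n - 1)"
    using DG by (simp add: mult_ac)
  also have "\<dots> = (V * fps_deriv G * (\<Sum>k\<le>n - 1. fps_const (D $ k) * G ^ k)) $ (n - 1)"
    by (rule fps_mult_nth_cong) (rule fps_compose_nth_truncated[OF G0])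
  also have "\<dots> = (\<Sum>k\<le>n - 1. D $ k * (V * fps_deriv G * G ^ k) $ (n - 1))"
    by (simp only: sum_distrib_left fps_sum_nth fps_mult_left_const_nth mult.left_commute)
  also have "\<dots> = (\<Sum>k\<le>n - 1. if k = n - 1 then D $ k else 0)"
    using n residue_inverse_power_deriv_mult_power[OF \<psi>0, of _ n]
    by (intro sum.cong refl) (simp only: V_def G_def, simp)
  also have "\<dots> = of_nat n * fps_inv G $ n"
    using n by (simp add: D_def)
  finally show ?thesis
    by (simp add: V_def G_def)
qed

section \<open>The multinomial theorem\<close>

definition multi_indices :: "'i set \<Rightarrow> nat \<Rightarrow> ('i \<Rightarrow> nat) set" where
  "multi_indices I j = {\<rho>. (\<forall>i. i \<notin> I \<longrightarrow> \<rho> i = 0) \<and> (\<Sum>i\<in>I. \<rho> i) = j}"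

lemma finite_multi_indices:
  assumes "finite I"
  shows "finite (multi_indices I j)"
proof -
  have "multi_indices I j \<subseteq> {f. \<forall>x. (x \<in> I \<longrightarrow> f x \<in> {..j}) \<and> (x \<notin> I \<longrightarrow> f x = 0)}"
  proof
    fix \<rho> assume \<rho>: "\<rho> \<in> multi_indices I j"
    have "\<rho> x \<le> j" if "x \<in> I" for x
      using \<rho> that assms unfolding multi_indices_def
      by (auto intro: member_le_sum[of x I \<rho>, simplified])
    then show "\<rho> \<in> {f. \<forall>x. (x \<in> I \<longrightarrow> f x \<in> {..j}) \<and> (x \<notin> I \<longrightarrow> f x = 0)}"
      using \<rho> unfolding multi_indices_def by auto
  qed
  then show ?thesis
    by (rule finite_subset) (intro finite_set_of_finite_funs assms finite_atMost)
qed

lemma multi_indices_empty: "multi_indices {} j = (if j = 0 then {\<lambda>_. 0} else {})"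
  unfolding multi_indices_def by auto

lemma bij_betw_multi_indices_insert:
  assumes "finite I" and "k \<notin> I"
  shows "bij_betw (\<lambda>\<sigma>. (\<sigma> k, \<sigma>(k := 0))) (multi_indices (insert k I) j)
           (SIGMA p:{..j}. multi_indices I (j - p))"
proof (rule bij_betw_byWitness[where f' = "\<lambda>(p, \<rho>). \<rho>(k := p)"])
  have sum_upd: "(\<Sum>i\<in>I. (\<sigma>(k := p)) i) = (\<Sum>i\<in>I. \<sigma> i)" for \<sigma> :: "'a \<Rightarrow> nat" and p
    using assms(2) by (intro sum.cong) auto
  show "(\<lambda>\<sigma>. (\<sigma> k, \<sigma>(k := 0))) ` multi_indices (insert k I) j
          \<subseteq> (SIGMA p:{..j}. multi_indices I (j - p))"
    using assms sum_upd[of _ 0] by (auto simp: multi_indices_def)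
  show "(\<lambda>(p, \<rho>). \<rho>(k := p)) ` (SIGMA p:{..j}. multi_indices I (j - p))
          \<subseteq> multi_indices (insert k I) j"
    using assms sum_upd by (auto simp: multi_indices_def)
qed (use assms(2) in \<open>auto simp: multi_indices_def\<close>)

lemma multinomial_summand_insert:
  fixes Y :: "'i \<Rightarrow> 'a::field_char_0 fps"
  assumes I: "finite I" "k \<notin> I" and p: "\<sigma> k \<le> j"
  shows "of_nat (j choose \<sigma> k) * Y k ^ \<sigma> k *
      (fps_const (fact (j - \<sigma> k) / (\<Prod>i\<in>I. fact ((\<sigma>(k := 0)) i))) * (\<Prod>i\<in>I. Y i ^ (\<sigma>(k := 0)) i))
    = fps_const (fact j / (\<Prod>i\<in>insert k I. fact (\<sigma> i))) * (\<Prod>i\<in>insert k I. Y i ^ \<sigma> i)"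
proof -
  define P where "P = (\<Prod>i\<in>I. fact (\<sigma> i) :: 'a)"
  have "P \<noteq> 0"
    using I by (simp add: P_def)
  then have "fact j / (fact (\<sigma> k) * P) = of_nat (j choose \<sigma> k) * (fact (j - \<sigma> k) / P)"
    unfolding binomial_fact[OF p, where 'a='a] by (simp add: field_simps)
  then have coeff: "fps_const (fact j / (fact (\<sigma> k) * P))
      = of_nat (j choose \<sigma> k) * fps_const (fact (j - \<sigma> k) / P)"
    by (simp flip: fps_of_nat)
  have prods: "(\<Prod>i\<in>I. fact ((\<sigma>(k := 0)) i)) = P"
    "(\<Prod>i\<in>I. Y i ^ (\<sigma>(k := 0)) i) = (\<Prod>i\<in>I. Y i ^ \<sigma> i)"
    "(\<Prod>i\<in>insert k I. fact (\<sigma> i)) = fact (\<sigma> k) * P"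
    "(\<Prod>i\<in>insert k I. Y i ^ \<sigma> i) = Y k ^ \<sigma> k * (\<Prod>i\<in>I. Y i ^ \<sigma> i)"
    using I unfolding P_def by (auto intro: prod.cong)
  show ?thesis
    unfolding prods coeff by (simp only: mult_ac)
qed

lemma power_sum_multinomial:
  fixes Y :: "'i \<Rightarrow> 'a::field_char_0 fps"
  assumes "finite I"
  shows "(\<Sum>i\<in>I. Y i) ^ j =
    (\<Sum>\<rho>\<in>multi_indices I j. fps_const (fact j / (\<Prod>i\<in>I. fact (\<rho> i))) * (\<Prod>i\<in>I. Y i ^ \<rho> i))"
  using assms
proof (induction I arbitrary: j rule: finite_induct)
  case empty
  then show ?case by (cases j) (simp_all add: multi_indices_empty)
next
  case (insert k I)
  define F where "F p \<rho> = of_nat (j choose p) * Y k ^ p *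
      (fps_const (fact (j - p) / (\<Prod>i\<in>I. fact (\<rho> i))) * (\<Prod>i\<in>I. Y i ^ \<rho> i))" for p \<rho>
  have bij: "bij_betw (\<lambda>\<sigma>. (\<sigma> k, \<sigma>(k := 0))) (multi_indices (insert k I) j)
               (SIGMA p:{..j}. multi_indices I (j - p))"
    by (rule bij_betw_multi_indices_insert[OF insert.hyps])
  have "(\<Sum>i\<in>insert k I. Y i) ^ j = (Y k + (\<Sum>i\<in>I. Y i)) ^ j"
    using insert.hyps by simp
  also have "\<dots> = (\<Sum>p\<le>j. of_nat (j choose p) * Y k ^ p * (\<Sum>i\<in>I. Y i) ^ (j - p))"
    by (rule binomial_ring)
  also have "\<dots> = (\<Sum>p\<le>j. \<Sum>\<rho>\<in>multi_indices I (j - p). F p \<rho>)"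
    by (simp add: insert.IH F_def sum_distrib_left)
  also have "\<dots> = (\<Sum>(p, \<rho>)\<in>(SIGMA p:{..j}. multi_indices I (j - p)). F p \<rho>)"
    by (rule sum.Sigma) (auto intro: finite_multi_indices insert.hyps)
  also have "\<dots> = (\<Sum>\<sigma>\<in>multi_indices (insert k I) j. F (\<sigma> k) (\<sigma>(k := 0)))"
    using sum.reindex_bij_betw[OF bij, of "\<lambda>(p, \<rho>). F p \<rho>"] by simp
  also have "\<dots> = (\<Sum>\<sigma>\<in>multi_indices (insert k I) j.
      fps_const (fact j / (\<Prod>i\<in>insert k I. fact (\<sigma> i))) * (\<Prod>i\<in>insert k I. Y i ^ \<sigma> i))"
  proof (rule sum.cong[OF refl])
    fix \<sigma> assume "\<sigma> \<in> multi_indices (insert k I) j"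
    then have "\<sigma> k \<le> j"
      using bij_betwE[OF bij] by auto
    then show "F (\<sigma> k) (\<sigma>(k := 0)) = fps_const (fact j / (\<Prod>i\<in>insert k I. fact (\<sigma> i))) *
        (\<Prod>i\<in>insert k I. Y i ^ \<sigma> i)"
      unfolding F_def by (rule multinomial_summand_insert[OF insert.hyps])
  qed
  finally show ?case .
qed

lemma power_sum_monomials_nth:
  fixes c :: "'i \<Rightarrow> 'a::field_char_0"
  assumes "finite I"
  shows "((\<Sum>i\<in>I. fps_const (c i) * fps_X ^ e i) ^ j) $ m =
    (\<Sum>\<rho>\<in>{\<rho>\<in>multi_indices I j. (\<Sum>i\<in>I. e i * \<rho> i) = m}.
       fact j / (\<Prod>i\<in>I. fact (\<rho> i)) * (\<Prod>i\<in>I. c i ^ \<rho> i))"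
proof -
  have monomial: "(\<Prod>i\<in>I. (fps_const (c i) * fps_X ^ e i) ^ \<rho> i) =
      fps_const (\<Prod>i\<in>I. c i ^ \<rho> i) * fps_X ^ (\<Sum>i\<in>I. e i * \<rho> i)" for \<rho>
    using assms
  proof (induction I rule: finite_induct)
    case empty
    then show ?case by simp
  next
    case (insert x F)
    then show ?case
      by (simp add: power_mult_distrib power_add power_mult[symmetric] mult_ac)
  qed
  have "((\<Sum>i\<in>I. fps_const (c i) * fps_X ^ e i) ^ j) $ m =
     (\<Sum>\<rho>\<in>multi_indices I j. if (\<Sum>i\<in>I. e i * \<rho> i) = m
        then fact j / (\<Prod>i\<in>I. fact (\<rho> i)) * (\<Prod>i\<in>I. c i ^ \<rho> i) else 0)"
    unfolding power_sum_multinomial[OF assms] fps_sum_nth monomial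
    by (intro sum.cong refl) (auto simp: mult.assoc)
  then show ?thesis
    by (simp only: sum.inter_filter[OF finite_multi_indices[OF assms]])
qed

section \<open>The explicit formula for \<open>A\<^sub>n\<^sub>,\<^sub>1\<close>\<close>

definition A1_field :: "nat \<Rightarrow> (nat \<Rightarrow> 'a::field_char_0) \<Rightarrow> 'a" where
  "A1_field n X = inverse (X 1) ^ (2 * n - 1) *
     (\<Sum>r\<in>A_idx n.
        ((-1) ^ (n - 1 - r 1) * fact (2 * n - 2 - r 1) / (\<Prod>i=2..n. fact (r i) * fact i ^ r i)) *
        (\<Prod>i=1..n. X i ^ r i))"

lemma inverse_one_plus_power:
  fixes w :: "'a::field_char_0 fps"
  assumes w0: "w $ 0 = 0"
  shows "inverse ((1 + w) ^ n) = fps_binomial (- of_nat n) oo w"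
proof -
  have "(1 + w) ^ n = (1 + fps_X) ^ n oo w"
    using w0 by (simp add: fps_compose_power[symmetric] fps_compose_add_distrib)
  moreover have "(1 + fps_X :: 'a fps) ^ n * fps_binomial (- of_nat n) = 1"
    unfolding fps_binomial_minus_of_nat by (rule inverse_mult_eq_1') simp
  ultimately have "(1 + w) ^ n * (fps_binomial (- of_nat n) oo w) = 1"
    by (simp add: fps_compose_mult_distrib[OF w0, symmetric])
  then show ?thesis
    by (rule fps_inverse_unique)
qed

lemma inverse_const_mult_one_plus_power:
  fixes w :: "'a::field_char_0 fps"
  assumes w0: "w $ 0 = 0" and a: "a \<noteq> 0"
  shows "inverse (fps_const a * (1 + w)) ^ n
           = fps_const (inverse a ^ n) * (fps_binomial (- of_nat n) oo w)"
proof -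
  have unit: "((1 + w) ^ n) $ 0 \<noteq> 0"
    using w0 by (simp add: fps_nth_power_0)
  have "(fps_const a * (1 + w)) ^ n *
        (fps_const (inverse a ^ n) * (fps_binomial (- of_nat n) oo w))
      = fps_const (a ^ n * inverse a ^ n) * ((1 + w) ^ n * inverse ((1 + w) ^ n))"
    by (simp add: inverse_one_plus_power[OF w0] power_mult_distrib mult_ac)
  also have "\<dots> = 1"
    using a unit
    by (simp add: inverse_mult_eq_1' power_mult_distrib[symmetric])
  finally show ?thesis
    by (metis fps_inverse_power fps_inverse_unique)
qed

lemma gbinomial_minus_of_nat:
  assumes "n \<ge> 1"
  shows "((- of_nat n :: 'a::field_char_0) gchoose j) = (-1) ^ j * of_nat ((n - 1 + j) choose j)"
proof -
  have "(of_nat n + of_nat j - 1 :: 'a) = of_nat (n - 1 + j)"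
    using assms by simp
  then show ?thesis
    by (simp only: gbinomial_minus binomial_gbinomial)
qed

lemma sum_atLeast_1_atMost_eq:
  fixes g :: "nat \<Rightarrow> 'a::comm_monoid_add"
  assumes "n \<ge> 1"
  shows "(\<Sum>i=1..n. g i) = g 1 + (\<Sum>i=2..n. g i)"
  using sum.atLeast_Suc_atMost[OF assms, of g] by (simp add: numeral_2_eq_2)

lemma prod_atLeast_1_atMost_eq:
  fixes g :: "nat \<Rightarrow> 'a::comm_monoid_mult"
  assumes "n \<ge> 1"
  shows "(\<Prod>i=1..n. g i) = g 1 * (\<Prod>i=2..n. g i)"
  using prod.atLeast_Suc_atMost[OF assms, of g] by (simp add: numeral_2_eq_2)

lemma sum_index_mult_eq:
  "(\<Sum>i=2..n. i * \<rho> i) = (\<Sum>i=2..n. (i - 1) * \<rho> i) + (\<Sum>i=2..n. \<rho> i :: nat)"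
proof -
  have "(\<Sum>i=2..n. i * \<rho> i) = (\<Sum>i=2..n. (i - 1) * \<rho> i + \<rho> i)"
    by (intro sum.cong refl) (auto simp: algebra_simps Suc_diff_le)
  then show ?thesis
    by (simp add: sum.distrib)
qed

definition weighted_multi_indices :: "nat \<Rightarrow> nat \<Rightarrow> (nat \<Rightarrow> nat) set" where
  "weighted_multi_indices n j =
     {\<rho> \<in> multi_indices {2..n} j. (\<Sum>i=2..n. (i - 1) * \<rho> i) = n - 1}"

lemma bij_betw_A_idx:
  assumes n: "n \<ge> 1"
  shows "bij_betw (\<lambda>r. (\<Sum>i=2..n. r i, r(1 := 0))) (A_idx n)
           (SIGMA j:{0..n - 1}. weighted_multi_indices n j)"
proof (rule bij_betw_byWitness[where f' = "\<lambda>(j, \<rho>). \<rho>(1 := n - 1 - j)"])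
  have upd_sum: "(\<Sum>i=2..n. (r(1 := p)) i) = (\<Sum>i=2..n. r i)"
    for r :: "nat \<Rightarrow> nat" and p
    by (intro sum.cong) auto
  have upd_wsum: "(\<Sum>i=2..n. h i * (r(1 := p)) i) = (\<Sum>i=2..n. h i * r i)"
    for r :: "nat \<Rightarrow> nat" and p and h :: "nat \<Rightarrow> nat"
    by (intro sum.cong) auto
  have A_idx_sums: "r 1 + (\<Sum>i=2..n. r i) = n - 1" "r 1 + (\<Sum>i=2..n. i * r i) = 2 * n - 2"
    if "r \<in> A_idx n" for r
    using that sum_atLeast_1_atMost_eq[OF n, of r] sum_atLeast_1_atMost_eq[OF n, of "\<lambda>i. i * r i"]
    unfolding A_idx_def by auto
  show "\<forall>r\<in>A_idx n. (case (\<Sum>i=2..n. r i, r(1 := 0)) of (j, \<rho>) \<Rightarrow> \<rho>(1 := n - 1 - j)) = r"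
    using A_idx_sums by fastforce
  show "\<forall>x\<in>SIGMA j:{0..n - 1}. weighted_multi_indices n j.
          (\<lambda>r. (\<Sum>i=2..n. r i, r(1 := 0))) (case x of (j, \<rho>) \<Rightarrow> \<rho>(1 := n - 1 - j)) = x"
    using upd_sum by (auto simp: weighted_multi_indices_def multi_indices_def)
  show "(\<lambda>r. (\<Sum>i=2..n. r i, r(1 := 0))) ` A_idx n
          \<subseteq> (SIGMA j:{0..n - 1}. weighted_multi_indices n j)"
  proof (rule image_subsetI)
    fix r assume r: "r \<in> A_idx n"
    have "(\<Sum>i=2..n. (i - 1) * r i) = n - 1"
      using A_idx_sums[OF r] sum_index_mult_eq[of r n] by linarith
    then show "(\<Sum>i=2..n. r i, r(1 := 0)) \<in> (SIGMA j:{0..n - 1}. weighted_multi_indices n j)"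
      using r A_idx_sums[OF r] upd_sum upd_wsum[of "\<lambda>i. i - 1"]
      by (auto simp: weighted_multi_indices_def multi_indices_def A_idx_def)
  qed
  show "(\<lambda>(j, \<rho>). \<rho>(1 := n - 1 - j)) ` (SIGMA j:{0..n - 1}. weighted_multi_indices n j) \<subseteq> A_idx n"
  proof (rule image_subsetI)
    fix x assume "x \<in> (SIGMA j:{0..n - 1}. weighted_multi_indices n j)"
    then obtain j \<rho> where x: "x = (j, \<rho>)"
      and j: "j \<in> {0..n - 1}" and \<rho>: "\<rho> \<in> weighted_multi_indices n j"
      by auto
    have \<rho>_sums: "(\<Sum>i=2..n. \<rho> i) = j" "(\<Sum>i=2..n. (i - 1) * \<rho> i) = n - 1"
      and \<rho>_zero: "\<And>i. i \<notin> {2..n} \<Longrightarrow> \<rho> i = 0"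
      using \<rho> by (auto simp: weighted_multi_indices_def multi_indices_def)
    have "(\<Sum>i=1..n. (\<rho>(1 := n - 1 - j)) i) = n - 1"
      using sum_atLeast_1_atMost_eq[OF n, of "\<rho>(1 := n - 1 - j)"] upd_sum \<rho>_sums j by simp
    moreover have "(\<Sum>i=1..n. i * (\<rho>(1 := n - 1 - j)) i) = 2 * n - 2"
      using sum_atLeast_1_atMost_eq[OF n, of "\<lambda>i. i * (\<rho>(1 := n - 1 - j)) i"]
        upd_wsum[of id] sum_index_mult_eq[of \<rho> n] \<rho>_sums j by simp
    ultimately show "(case x of (j, \<rho>) \<Rightarrow> \<rho>(1 := n - 1 - j)) \<in> A_idx n"
      using \<rho>_zero by (auto simp: A_idx_def x)
  qed
qed

lemma inverse_const_mult_one_plus_power_nth: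
  fixes b :: "nat \<Rightarrow> 'a::field_char_0"
  assumes a: "a \<noteq> 0" and n: "n \<ge> 1"
  shows "(inverse (fps_const a * (1 + Abs_fps (\<lambda>i. if i = 0 then 0 else b (Suc i)))) ^ n) $ (n - 1)
    = inverse a ^ n * (\<Sum>j=0..n - 1. ((- of_nat n) gchoose j) *
        (\<Sum>\<rho>\<in>weighted_multi_indices n j.
           fact j / (\<Prod>i=2..n. fact (\<rho> i)) * (\<Prod>i=2..n. b i ^ \<rho> i)))"
proof -
  define w where "w = Abs_fps (\<lambda>i. if i = 0 then 0 else b (Suc i))"
  define w' where "w' = (\<Sum>l\<in>{2..n}. fps_const (b l) * fps_X ^ (l - 1))"
  have w0: "w $ 0 = 0"
    by (simp add: w_def)
  have "w $ i = w' $ i" if "i \<le> n - 1" for i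
  proof -
    have "w' $ i = (\<Sum>l\<in>{2..n}. if l = Suc i then b l else 0)"
      unfolding w'_def fps_sum_nth by (intro sum.cong) auto
    also have "\<dots> = (if i \<ge> 1 then b (Suc i) else 0)"
      using that n by simp
    finally show ?thesis
      by (simp add: w_def)
  qed
  then have "(w ^ j) $ (n - 1) = (w' ^ j) $ (n - 1)" for j
    by (rule fps_power_nth_cong) auto
  then show ?thesis
    unfolding w_def[symmetric] inverse_const_mult_one_plus_power[OF w0 a]
    by (simp add: fps_compose_nth w'_def power_sum_monomials_nth weighted_multi_indices_def)
qed

lemma A1_field_summand:
  fixes X :: "nat \<Rightarrow> 'a::field_char_0"
  assumes X1: "X 1 \<noteq> 0" and n: "n \<ge> 1" and r: "r \<in> A_idx n"
  defines "j \<equiv> \<Sum>i=2..n. r i"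
  shows "fact (n - 1) * inverse (X 1) ^ n * ((- of_nat n) gchoose j) *
       (fact j / (\<Prod>i=2..n. fact (r i)) * (\<Prod>i=2..n. (X i / (X 1 * fact i)) ^ r i))
     = inverse (X 1) ^ (2 * n - 1) *
       ((-1) ^ (n - 1 - r 1) * fact (2 * n - 2 - r 1) / (\<Prod>i=2..n. fact (r i) * fact i ^ r i)) *
       (\<Prod>i=1..n. X i ^ r i)"
proof -
  define Pf where "Pf = (\<Prod>i=2..n. fact (r i) :: 'a)"
  define Pi where "Pi = (\<Prod>i=2..n. fact i ^ r i :: 'a)"
  define Px where "Px = (\<Prod>i=2..n. X i ^ r i)"
  have r1: "r 1 = n - 1 - j" and j: "j \<le> n - 1"
    using r sum_atLeast_1_atMost_eq[OF n, of r] by (auto simp: A_idx_def j_def)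
  have exps: "n - 1 - r 1 = j" "2 * n - 2 - r 1 = n - 1 + j" "2 * n - 1 = (n + j) + (n - 1 - j)"
    using n j r1 by auto
  have "Pf \<noteq> 0" "Pi \<noteq> 0"
    by (simp_all add: Pf_def Pi_def)
  have powers: "(\<Prod>i=2..n. (X i / (X 1 * fact i)) ^ r i) = Px / (X 1 ^ j * Pi)"
    unfolding Px_def Pi_def j_def
    by (simp add: power_divide power_mult_distrib prod.distrib prod_dividef power_sum)
  have facts: "(\<Prod>i=2..n. fact (r i) * fact i ^ r i :: 'a) = Pf * Pi"
    by (simp add: Pf_def Pi_def prod.distrib)
  have "fact j * fact (n - 1 + j - j) * ((n - 1 + j) choose j) = fact (n - 1 + j)"
    by (rule binomial_fact_lemma) simp
  then have "(of_nat (fact j * fact (n - 1) * ((n - 1 + j) choose j)) :: 'a)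
      = of_nat (fact (n - 1 + j))"
    by simp
  then have binom: "(fact (n - 1 + j) :: 'a)
      = fact (n - 1) * of_nat ((n - 1 + j) choose j) * fact j"
    by (simp add: mult_ac)
  have "inverse (X 1) ^ (2 * n - 1) * X 1 ^ (n - 1 - j) = inverse (X 1) ^ n * inverse (X 1) ^ j"
    unfolding exps(3) power_add using X1 by (simp add: field_simps)
  then show ?thesis
    unfolding exps(1,2)
    unfolding powers facts binom gbinomial_minus_of_nat[OF n] prod_atLeast_1_atMost_eq[OF n] r1
      Pf_def[symmetric] Px_def[symmetric]
    using X1 \<open>Pf \<noteq> 0\<close> \<open>Pi \<noteq> 0\<close> by (simp add: field_simps)
qed

text \<open>Write \<open>\<psi> = a (1 + w)\<close> with \<open>a = X 1\<close>; then \<open>\<psi>\<^sup>-\<^sup>n\<close> is expanded binomially in \<open>w\<close> and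
  each \<open>w\<^sup>j\<close> multinomially, and the resulting multi-indices are those of \<open>A_idx n\<close>.\<close>
lemma inverse_power_nth_eq_A1_field:
  fixes X :: "nat \<Rightarrow> 'a::field_char_0"
  assumes X1: "X 1 \<noteq> 0" and n: "n \<ge> 1"
  shows "fact (n - 1) * (inverse (Abs_fps (\<lambda>i. X (Suc i) / fact (Suc i))) ^ n) $ (n - 1)
           = A1_field n X"
proof -
  define b where "b i = X i / (X 1 * fact i)" for i
  define T where "T j \<rho> = fact (n - 1) * inverse (X 1) ^ n * ((- of_nat n) gchoose j) *
       (fact j / (\<Prod>i=2..n. fact (\<rho> i)) * (\<Prod>i=2..n. b i ^ \<rho> i))" for j \<rho>
  have \<psi>: "Abs_fps (\<lambda>i. X (Suc i) / fact (Suc i))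
      = fps_const (X 1) * (1 + Abs_fps (\<lambda>i. if i = 0 then 0 else b (Suc i)))"
    using X1 by (auto simp: fps_eq_iff b_def)
  have "fact (n - 1) * (inverse (Abs_fps (\<lambda>i. X (Suc i) / fact (Suc i))) ^ n) $ (n - 1)
      = (\<Sum>j=0..n - 1. \<Sum>\<rho>\<in>weighted_multi_indices n j. T j \<rho>)"
    unfolding \<psi> inverse_const_mult_one_plus_power_nth[OF X1 n]
    by (simp add: T_def sum_distrib_left mult_ac)
  also have "\<dots> = (\<Sum>(j, \<rho>)\<in>(SIGMA j:{0..n - 1}. weighted_multi_indices n j). T j \<rho>)"
    by (rule sum.Sigma)
      (use finite_multi_indices[of "{2..n}"] in \<open>auto simp: weighted_multi_indices_def\<close>)
  also have "\<dots> = (\<Sum>r\<in>A_idx n. T (\<Sum>i=2..n. r i) (r(1 := 0)))"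
    using sum.reindex_bij_betw[OF bij_betw_A_idx[OF n], of "\<lambda>(j, \<rho>). T j \<rho>"] by simp
  also have "\<dots> = (\<Sum>r\<in>A_idx n. T (\<Sum>i=2..n. r i) r)"
    unfolding T_def
    by (intro sum.cong refl arg_cong2[where f = "(*)"] prod.cong arg_cong2[where f = "(/)"]) auto
  also have "\<dots> = A1_field n X"
    unfolding A1_field_def sum_distrib_left
  proof (intro sum.cong refl)
    fix r assume "r \<in> A_idx n"
    then show "T (\<Sum>i=2..n. r i) r = inverse (X 1) ^ (2 * n - 1) *
      ((-1) ^ (n - 1 - r 1) * fact (2 * n - 2 - r 1) / (\<Prod>i=2..n. fact (r i) * fact i ^ r i) *
       (\<Prod>i=1..n. X i ^ r i))"
      using A1_field_summand[of X n r, OF X1 n] by (simp only: T_def b_def mult.assoc)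
  qed
  finally show ?thesis .
qed

lemma fps_inv_egf_eq_A1_field:
  fixes X :: "nat \<Rightarrow> 'a::field_char_0"
  assumes X1: "X 1 \<noteq> 0"
  shows "fps_inv (Abs_fps (\<lambda>n. if n = 0 then 0 else X n / fact n))
           = Abs_fps (\<lambda>k. if k = 0 then 0 else A1_field k X / fact k)"
proof (rule fps_ext)
  fix k
  define \<psi> where "\<psi> = Abs_fps (\<lambda>i. X (Suc i) / fact (Suc i))"
  have \<psi>0: "\<psi> $ 0 \<noteq> 0"
    using X1 by (simp add: \<psi>_def)
  have G: "Abs_fps (\<lambda>n. if n = 0 then 0 else X n / fact n) = fps_X * \<psi>"
  proof (rule fps_ext)
    fix n
    show "Abs_fps (\<lambda>n. if n = 0 then 0 else X n / fact n) $ n = (fps_X * \<psi>) $ n"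
      by (cases n) (simp_all add: \<psi>_def del: fact_Suc)
  qed
  show "fps_inv (Abs_fps (\<lambda>n. if n = 0 then 0 else X n / fact n)) $ k
          = Abs_fps (\<lambda>k. if k = 0 then 0 else A1_field k X / fact k) $ k"
  proof (cases "k = 0")
    case True
    then show ?thesis by (simp add: fps_inv_def)
  next
    case False
    then have k: "k \<ge> 1" by simp
    have "fact k * fps_inv (fps_X * \<psi>) $ k = fact (k - 1) * (of_nat k * fps_inv (fps_X * \<psi>) $ k)"
      using k fact_reduce[of k, where 'a='a] by (simp add: mult_ac)
    also have "\<dots> = A1_field k X"
      unfolding fps_inv_nth_Lagrange[OF \<psi>0 k] unfolding \<psi>_def
      by (rule inverse_power_nth_eq_A1_field[of X k, OF X1 k])
    finally show ?thesis
      using False unfolding G by (simp add: eq_divide_eq mult.commute)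
  qed
qed

section \<open>Substitution into a power series with power series coefficients\<close>

text \<open>Substitution of \<open>s\<close> for \<open>y\<close> in \<open>F \<in> K[[x]][[y]]\<close>. For \<open>s $ 0 = 0\<close> only the terms
  with \<open>n \<le> N\<close> contribute to the coefficient of \<open>x\<^sup>N\<close>, so the sum may be truncated there.\<close>
definition fps_eval :: "'a::comm_ring_1 fps fps \<Rightarrow> 'a fps \<Rightarrow> 'a fps" where
  "fps_eval F s = Abs_fps (\<lambda>N. \<Sum>n\<le>N. (F $ n * s ^ n) $ N)"

lemma fps_eval_nth: "fps_eval F s $ N = (\<Sum>n\<le>N. (F $ n * s ^ n) $ N)"
  by (simp add: fps_eval_def)

lemma fps_mult_power_nth_eq_0:
  fixes s A :: "'a::comm_ring_1 fps"
  assumes "s $ 0 = 0" and "N < n"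
  shows "(A * s ^ n) $ N = 0"
  unfolding fps_mult_nth using startsby_zero_power_prefix[OF assms(1)] assms(2)
  by (intro sum.neutral) auto

lemma fps_eval_nth_eq_partial_sum:
  fixes s :: "'a::comm_ring_1 fps"
  assumes s0: "s $ 0 = 0" and "N \<le> M"
  shows "fps_eval F s $ N = (\<Sum>n\<le>M. F $ n * s ^ n) $ N"
proof -
  have "(\<Sum>n\<le>M. F $ n * s ^ n) $ N = (\<Sum>n\<le>M. (F $ n * s ^ n) $ N)"
    by (simp add: fps_sum_nth)
  also have "\<dots> = (\<Sum>n\<le>N. (F $ n * s ^ n) $ N)"
    by (rule sum.mono_neutral_right) (use assms fps_mult_power_nth_eq_0[OF s0] in auto)
  finally show ?thesis
    by (simp add: fps_eval_nth)
qed

lemma fps_eval_nth_cong: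
  assumes "\<And>k. k \<le> N \<Longrightarrow> F $ k = G $ k"
  shows "fps_eval F s $ N = fps_eval G s $ N"
  using assms by (simp add: fps_eval_nth)

lemma fps_eval_nth_0:
  assumes "F $ 0 = 0"
  shows "fps_eval F s $ 0 = 0"
  using assms by (simp add: fps_eval_nth)

lemma fps_eval_add: "fps_eval (F + G) s = fps_eval F s + fps_eval G s"
  by (simp add: fps_eval_def fps_eq_iff distrib_right sum.distrib)

lemma fps_eval_const: "fps_eval (fps_const c) s = c"
proof (rule fps_ext)
  fix N
  have "fps_eval (fps_const c) s $ N = (\<Sum>n\<le>N. if n = 0 then (c * s ^ n) $ N else 0)"
    unfolding fps_eval_nth by (intro sum.cong refl) auto
  then show "fps_eval (fps_const c) s $ N = c $ N"
    by simp
qed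

lemma fps_eval_X:
  fixes s :: "'a::comm_ring_1 fps"
  assumes "s $ 0 = 0"
  shows "fps_eval fps_X s = s"
proof (rule fps_ext)
  fix N
  have "fps_eval fps_X s $ N = (\<Sum>n\<le>N. if n = 1 then s $ N else 0)"
    unfolding fps_eval_nth by (intro sum.cong refl) (auto simp: fps_X_def)
  then show "fps_eval fps_X s $ N = s $ N"
    using assms by (cases N) simp_all
qed

lemma fps_eval_mult:
  fixes s :: "'a::comm_ring_1 fps"
  assumes s0: "s $ 0 = 0"
  shows "fps_eval (F * G) s = fps_eval F s * fps_eval G s"
proof (rule fps_ext)
  fix N
  define t where "t k l = F $ k * G $ l * s ^ (k + l)" for k l
  have "(fps_eval F s * fps_eval G s) $ N
      = ((\<Sum>k\<le>N. F $ k * s ^ k) * (\<Sum>l\<le>N. G $ l * s ^ l)) $ N"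
    unfolding fps_mult_nth
    by (intro sum.cong refl) (simp add: fps_eval_nth_eq_partial_sum[OF s0, where M = N])
  also have "\<dots> = (\<Sum>(k, l)\<in>{..N} \<times> {..N}. t k l $ N)"
    unfolding sum_product fps_sum_nth sum.cartesian_product t_def
    by (intro sum.cong refl) (auto simp: power_add mult_ac)
  also have "\<dots> = (\<Sum>(k, l)\<in>{(k, l). k + l \<le> N}. t k l $ N)"
    by (rule sum.mono_neutral_right)
      (auto simp: t_def intro!: fps_mult_power_nth_eq_0[OF s0])
  also have "\<dots> = (\<Sum>(k, l)\<in>{(k, l). k + l \<le> N}. F $ k * G $ l * s ^ (k + l)) $ N"
    by (simp add: fps_sum_nth case_prod_unfold t_def)
  also have "\<dots> = (\<Sum>m=0..N. \<Sum>i=0..m. F $ i * G $ (m - i) * s ^ m) $ N"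
    by (simp only: sum_pair_less_iff)
  also have "\<dots> = fps_eval (F * G) s $ N"
    by (simp add: fps_eval_nth_eq_partial_sum[OF s0 order.refl] fps_mult_nth sum_distrib_right
        atLeast0AtMost)
  finally show "fps_eval (F * G) s $ N = (fps_eval F s * fps_eval G s) $ N"
    by simp
qed

lemma fps_eval_power:
  fixes s :: "'a::comm_ring_1 fps"
  assumes "s $ 0 = 0"
  shows "fps_eval (F ^ k) s = fps_eval F s ^ k"
  by (induction k) (simp_all add: fps_eval_const[of 1, simplified] fps_eval_mult[OF assms])

lemma fps_eval_sum: "fps_eval (\<Sum>k\<in>A. F k) s = (\<Sum>k\<in>A. fps_eval (F k) s)"
  by (induction A rule: infinite_finite_induct)
    (simp_all add: fps_eval_const[of 0, simplified] fps_eval_add)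

lemma fps_eval_compose:
  fixes s :: "'a::comm_ring_1 fps"
  assumes s0: "s $ 0 = 0" and G0: "G $ 0 = 0"
  shows "fps_eval (F oo G) s = fps_eval F (fps_eval G s)"
proof (rule fps_ext)
  fix N
  have "fps_eval (F oo G) s $ N = fps_eval (\<Sum>k\<le>N. fps_const (F $ k) * G ^ k) s $ N"
    by (rule fps_eval_nth_cong) (rule fps_compose_nth_truncated[OF G0])
  also have "fps_eval (\<Sum>k\<le>N. fps_const (F $ k) * G ^ k) s = (\<Sum>k\<le>N. F $ k * fps_eval G s ^ k)"
    by (simp add: fps_eval_sum fps_eval_mult[OF s0] fps_eval_const fps_eval_power[OF s0])
  also have "(\<Sum>k\<le>N. F $ k * fps_eval G s ^ k) $ N = fps_eval F (fps_eval G s) $ N"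
    by (rule fps_eval_nth_eq_partial_sum[OF fps_eval_nth_0[OF G0] order.refl, symmetric])
  finally show "fps_eval (F oo G) s $ N = fps_eval F (fps_eval G s) $ N" .
qed

lemma fps_eval_sums:
  fixes s :: "'a::comm_ring_1 fps"
  assumes s0: "s $ 0 = 0" and F0: "F $ 0 = 0"
  shows "(\<lambda>j. F $ Suc j * s ^ Suc j) sums fps_eval F s"
  unfolding sums_def
proof (rule tendsto_fpsI)
  fix N
  show "\<forall>\<^sub>F m in sequentially. (\<Sum>j<m. F $ Suc j * s ^ Suc j) $ N = fps_eval F s $ N"
  proof (rule eventually_sequentiallyI)
    fix m assume "N \<le> m"
    have "(\<Sum>k<Suc m. F $ k * s ^ k) = F $ 0 * s ^ 0 + (\<Sum>j<m. F $ Suc j * s ^ Suc j)"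
      by (rule sum.lessThan_Suc_shift)
    then have "(\<Sum>j<m. F $ Suc j * s ^ Suc j) = (\<Sum>k\<le>m. F $ k * s ^ k)"
      using F0 by (simp add: lessThan_Suc_atMost)
    then show "(\<Sum>j<m. F $ Suc j * s ^ Suc j) $ N = fps_eval F s $ N"
      using \<open>N \<le> m\<close> by (simp add: fps_eval_nth_eq_partial_sum[OF s0])
  qed
qed

section \<open>The compositional inverse over \<open>K[[x]]\<close>\<close>

definition fps_to_fls_coeffs :: "'a::comm_ring_1 fps fps \<Rightarrow> 'a fls fps" where
  "fps_to_fls_coeffs F = Abs_fps (\<lambda>k. fps_to_fls (F $ k))"

lemma fps_to_fls_coeffs_nth [simp]: "fps_to_fls_coeffs F $ n = fps_to_fls (F $ n)"
  by (simp add: fps_to_fls_coeffs_def)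

lemma fps_to_fls_sum: "fps_to_fls (\<Sum>i\<in>A. g i) = (\<Sum>i\<in>A. fps_to_fls (g i :: 'a::comm_ring_1 fps))"
  by (induction A rule: infinite_finite_induct) simp_all

lemma fps_to_fls_prod: "fps_to_fls (\<Prod>i\<in>A. g i) = (\<Prod>i\<in>A. fps_to_fls (g i :: 'a::comm_ring_1 fps))"
  by (induction A rule: infinite_finite_induct) (simp_all add: fls_times_fps_to_fls)

lemma fps_to_fls_coeffs_mult:
  "fps_to_fls_coeffs (F * G) = fps_to_fls_coeffs F * fps_to_fls_coeffs G"
  by (rule fps_ext) (simp add: fps_mult_nth fps_to_fls_sum fls_times_fps_to_fls)

lemma fps_to_fls_coeffs_power: "fps_to_fls_coeffs (F ^ k) = fps_to_fls_coeffs F ^ k"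
proof (induction k)
  case 0
  show ?case by (rule fps_ext) simp
next
  case (Suc k)
  then show ?case by (simp add: fps_to_fls_coeffs_mult)
qed

lemma fps_to_fls_coeffs_compose:
  "fps_to_fls_coeffs (F oo G) = fps_to_fls_coeffs F oo fps_to_fls_coeffs G"
  by (rule fps_ext)
    (simp add: fps_compose_nth fps_to_fls_sum fls_times_fps_to_fls
      flip: fps_to_fls_coeffs_power)

lemma fps_to_fls_coeffs_X: "fps_to_fls_coeffs fps_X = fps_X"
  by (rule fps_ext) (simp add: fps_X_def)

lemma fps_to_fls_coeffs_inject: "fps_to_fls_coeffs F = fps_to_fls_coeffs G \<Longrightarrow> F = G"
  by (auto simp: fps_eq_iff fps_to_fls_coeffs_def)

lemma fls_const_prod: "fls_const (\<Prod>i\<in>A. g i) = (\<Prod>i\<in>A. fls_const (g i :: 'a::comm_ring_1))"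
  by (induction A rule: infinite_finite_induct)
    (simp_all add: fls_const_mult_const[symmetric] del: fls_const_mult_const)

lemma fls_const_fact: "fls_const (fact n) = (fact n :: 'a::field_char_0 fls)"
  by (metis fls_of_nat of_nat_fact)

lemma fps_to_fls_A1:
  fixes X :: "nat \<Rightarrow> 'a::field_char_0 fps"
  assumes "X 1 $ 0 \<noteq> 0"
  shows "fps_to_fls (A1 n X) = A1_field n (\<lambda>i. fps_to_fls (X i))"
proof -
  have "fps_to_fls (inverse (X 1)) = inverse (fps_to_fls (X 1))"
    using fls_inverse_fps_to_fls[OF subdegree_eq_0[OF assms]] by simp
  moreover have "fls_const ((-1) ^ p * fact q / (\<Prod>i\<in>I. fact (r i) * fact i ^ r i)) =
      ((-1) ^ p * fact q / (\<Prod>i\<in>I. fact (r i) * fact i ^ r i) :: 'a fls)" for p q I r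
    by (simp only: fls_const_divide_const[symmetric] fls_const_mult_const[symmetric]
        fls_const_power fls_const_uminus fls_const_1 fls_const_prod fls_const_fact)
  ultimately show ?thesis
    unfolding A1_def A1_field_def
    by (simp add: fls_times_fps_to_fls fps_to_fls_power fps_to_fls_sum fps_to_fls_prod
        del: fls_const_mult_const)
qed

definition A1_series :: "(nat \<Rightarrow> 'a::field_char_0 fps) \<Rightarrow> 'a fps fps" where
  "A1_series X = Abs_fps (\<lambda>k. if k = 0 then 0 else fps_const (1 / fact k) * A1 k X)"

lemma A1_series_right_inverse:
  fixes X :: "nat \<Rightarrow> 'a::field_char_0 fps"
  assumes X1: "X 1 $ 0 \<noteq> 0"
  shows "Abs_fps (\<lambda>n. if n = 0 then 0 else X n * fps_const (1 / fact n)) oo A1_series X = fps_X"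
    (is "?F oo _ = _")
proof (rule fps_to_fls_coeffs_inject)
  define Y where "Y = (\<lambda>i. fps_to_fls (X i))"
  define G where "G = Abs_fps (\<lambda>n. if n = 0 then 0 else Y n / fact n)"
  have Y1: "Y 1 \<noteq> 0"
    using X1 by (auto simp: Y_def)
  have fact_const: "fls_const (1 / fact n) = (1 / fact n :: 'a fls)" for n
    by (simp add: fls_const_divide_const[symmetric] fls_const_fact)
  have "fps_to_fls_coeffs ?F = G"
    by (rule fps_ext) (simp add: G_def Y_def fls_times_fps_to_fls fact_const)
  moreover have "fps_to_fls_coeffs (A1_series X) = fps_inv G"
    unfolding G_def fps_inv_egf_eq_A1_field[of Y, OF Y1]
    by (rule fps_ext)
      (simp add: A1_series_def Y_def fls_times_fps_to_fls fact_const fps_to_fls_A1[of X, OF X1])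
  moreover have "G oo fps_inv G = fps_X"
    by (rule fps_inv_right) (use Y1 in \<open>simp_all add: G_def\<close>)
  ultimately show "fps_to_fls_coeffs (?F oo A1_series X) = fps_to_fls_coeffs fps_X"
    by (simp add: fps_to_fls_coeffs_compose fps_to_fls_coeffs_X)
qed

section \<open>Solving \<open>f(x, y) = 0\<close>\<close>

definition phi_series :: "(nat \<Rightarrow> nat \<Rightarrow> 'a::field_char_0) \<Rightarrow> 'a fps fps" where
  "phi_series f = Abs_fps (\<lambda>n. phi f n * fps_const (1 / fact n))"

lemma subst2_eq_fps_eval: "subst2 f y = fps_eval (phi_series f) y"
  by (rule fps_ext) (simp add: subst2_def fps_eval_nth phi_series_def)

lemma power_diff_sum_nth_0:
  fixes y z :: "'a::comm_ring_1 fps"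
  assumes "y $ 0 = 0" and "z $ 0 = 0"
  shows "(\<Sum>i<n. z ^ (n - Suc i) * y ^ i) $ 0 = (if n = 1 then 1 else 0)"
proof -
  have "(z ^ (n - Suc i) * y ^ i) $ 0 = (if n = 1 then 1 else 0)" if "i < n" for i
    using assms that by (cases i) (auto simp: fps_nth_power_0 power_0_left)
  then show ?thesis
    by (simp add: fps_sum_nth)
qed

text \<open>At the lowest order \<open>d\<close> of \<open>y - z\<close>, the coefficient of \<open>f(x, y) - f(x, z)\<close> is
  \<open>f\<^sub>0\<^sub>,\<^sub>1 (y - z) $ d\<close>, because \<open>y\<^sup>n - z\<^sup>n\<close> has higher order for \<open>n \<ge> 2\<close>.\<close>
lemma subst2_inj:
  fixes f :: "nat \<Rightarrow> nat \<Rightarrow> 'a::field_char_0"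
  assumes f01: "f 0 1 \<noteq> 0" and y0: "y $ 0 = 0" and z0: "z $ 0 = 0"
    and eq: "subst2 f y = subst2 f z"
  shows "y = z"
proof (rule ccontr)
  assume "y \<noteq> z"
  define D where "D = y - z"
  define d where "d = subdegree D"
  define Q where "Q n = (\<Sum>i<n. z ^ (n - Suc i) * y ^ i)" for n
  define c where "c n = phi f n * fps_const (1 / fact n)" for n
  have "D \<noteq> 0"
    using \<open>y \<noteq> z\<close> by (simp add: D_def)
  then have Dd: "D $ d \<noteq> 0"
    unfolding d_def by (rule nth_subdegree_nonzero)
  have d: "d \<ge> 1"
  proof (rule ccontr)
    assume "\<not> d \<ge> 1"
    then have "d = 0"
      by simp
    then show False
      using Dd y0 z0 by (simp add: D_def)
  qed
  have c_diff: "(c n * (y ^ n - z ^ n)) $ d = D $ d * (c n $ 0 * Q n $ 0)" for n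
  proof -
    have factor: "c n * (y ^ n - z ^ n) = D * (c n * Q n)"
      unfolding D_def Q_def power_diff_sumr2 by (simp only: mult_ac)
    show ?thesis
      unfolding factor d_def nth_subdegree_mult_left by simp
  qed
  have "(subst2 f y - subst2 f z) $ d = (\<Sum>n\<le>d. (c n * (y ^ n - z ^ n)) $ d)"
    by (simp add: subst2_def c_def sum_subtractf right_diff_distrib)
  also have "\<dots> = (\<Sum>n\<le>d. D $ d * (c n $ 0 * Q n $ 0))"
    by (simp only: c_diff)
  also have "\<dots> = (\<Sum>n\<le>d. if n = 1 then D $ d * f 0 1 else 0)"
    by (intro sum.cong refl) (simp add: Q_def power_diff_sum_nth_0[OF y0 z0] c_def phi_def)
  also have "\<dots> = D $ d * f 0 1"
    using d by simp
  finally show False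
    using eq f01 Dd by simp
qed

lemma subst2_fps_eval_A1_series:
  fixes f :: "nat \<Rightarrow> nat \<Rightarrow> 'a::field_char_0"
  assumes f00: "f 0 0 = 0" and f01: "f 0 1 \<noteq> 0"
  shows "subst2 f (fps_eval (A1_series (phi f)) (- phi f 0)) = 0"
proof -
  define s where "s = - phi f 0"
  define G where "G = Abs_fps (\<lambda>n. if n = 0 then 0 else phi f n * fps_const (1 / fact n))"
  have s0: "s $ 0 = 0" and H0: "A1_series (phi f) $ 0 = 0"
    using f00 by (simp_all add: s_def phi_def A1_series_def)
  have "phi_series f = fps_const (phi f 0) + G"
    by (rule fps_ext) (simp add: phi_series_def G_def)
  then have "subst2 f (fps_eval (A1_series (phi f)) s)
      = phi f 0 + fps_eval (G oo A1_series (phi f)) s"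
    by (simp add: subst2_eq_fps_eval fps_eval_add fps_eval_const fps_eval_compose[OF s0 H0])
  also have "G oo A1_series (phi f) = fps_X"
    unfolding G_def by (rule A1_series_right_inverse) (use f01 in \<open>simp add: phi_def\<close>)
  also have "fps_eval fps_X s = s"
    by (rule fps_eval_X[OF s0])
  finally show ?thesis
    by (simp add: s_def)
qed

lemma fps_eval_A1_series_sums:
  fixes X :: "nat \<Rightarrow> 'a::field_char_0 fps"
  assumes "p $ 0 = 0"
  shows "(\<lambda>j. let k = j + 1 in fps_const ((-1) ^ k / fact k) * A1 k X * p ^ k)
           sums fps_eval (A1_series X) (- p)"
proof -
  have c: "fps_const ((-1) ^ k / fact k :: 'a) = (-1) ^ k * fps_const (1 / fact k)" for k :: nat
  proof -
    have "fps_const ((-1) ^ k / fact k :: 'a) = fps_const ((-1) ^ k) * fps_const (1 / fact k)"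
      unfolding fps_const_mult by simp
    also have "fps_const ((-1) ^ k :: 'a) = (-1) ^ k"
      by (simp only: fps_const_power[symmetric] fps_const_neg[symmetric] fps_const_1_eq_1)
    finally show ?thesis .
  qed
  have "(let k = j + 1 in fps_const ((-1) ^ k / fact k) * A1 k X * p ^ k)
      = A1_series X $ Suc j * (- p) ^ Suc j" for j
  proof -
    have "A1_series X $ (j + 1) = fps_const (1 / fact (j + 1)) * A1 (j + 1) X"
      by (simp add: A1_series_def)
    then show ?thesis
      unfolding Let_def Suc_eq_plus1 c power_minus[of p] by (simp only: mult_ac)
  qed
  then have "(\<lambda>j. let k = j + 1 in fps_const ((-1) ^ k / fact k) * A1 k X * p ^ k)
      = (\<lambda>j. A1_series X $ Suc j * (- p) ^ Suc j)"
    by (rule ext)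
  moreover have "(- p) $ 0 = 0" and "A1_series X $ 0 = 0"
    using assms by (simp_all add: A1_series_def)
  ultimately show ?thesis
    by (simp only: fps_eval_sums)
qed

lemma sums_fps_const_nth_mult:
  fixes P A :: "'a::comm_ring_1 fps"
  shows "(\<lambda>n. fps_const (P $ n) * A * fps_X ^ n) sums (P * A)"
  unfolding sums_def
proof (rule tendsto_fpsI)
  fix i
  show "\<forall>\<^sub>F m in sequentially. (\<Sum>n<m. fps_const (P $ n) * A * fps_X ^ n) $ i = (P * A) $ i"
  proof (rule eventually_sequentiallyI[of "Suc i"])
    fix m assume m: "Suc i \<le> m"
    have "(\<Sum>n<m. fps_const (P $ n) * A * fps_X ^ n) $ i
        = (\<Sum>n<m. P $ n * (if i < n then 0 else A $ (i - n)))"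
      by (simp add: fps_sum_nth mult.assoc fps_X_power_mult_right_nth)
    also have "\<dots> = (\<Sum>n=0..i. P $ n * A $ (i - n))"
      by (rule sum.mono_neutral_cong_right) (use m in auto)
    finally show "(\<Sum>n<m. fps_const (P $ n) * A * fps_X ^ n) $ i = (P * A) $ i"
      by (simp add: fps_mult_nth)
  qed
qed

lemma bellB_div_fact_eq_nth:
  fixes f :: "nat \<Rightarrow> nat \<Rightarrow> 'a::field_char_0"
  assumes "f 0 0 = 0"
  shows "(if k \<le> n then bellB n k (\<lambda>i. f i 0) / fact n else 0)
           = (fps_const (1 / fact k) * phi f 0 ^ k) $ n"
proof -
  have "Abs_fps (\<lambda>i. if i = 0 then 0 else f i 0 / fact i) = phi f 0"
    by (rule fps_ext) (simp add: phi_def assms)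
  moreover have "(phi f 0 ^ k) $ n = 0" if "n < k"
    using startsby_zero_power_prefix[of "phi f 0"] assms that by (simp add: phi_def)
  ultimately show ?thesis
    by (simp add: bellB_def)
qed

lemma bellB_series_sums:
  fixes f :: "nat \<Rightarrow> nat \<Rightarrow> 'a::field_char_0"
  assumes "f 0 0 = 0"
  shows "(\<lambda>n. if k \<le> n then fps_const ((-1) ^ k * bellB n k (\<lambda>i. f i 0) / fact n) * A * fps_X ^ n
               else 0)
           sums (fps_const ((-1) ^ k / fact k) * A * phi f 0 ^ k)"
    (is "?terms sums _")
proof -
  define P where "P = fps_const ((-1) ^ k / fact k) * phi f 0 ^ k"
  have "P $ n = (if k \<le> n then (-1) ^ k * bellB n k (\<lambda>i. f i 0) / fact n else 0)" for n
  proof -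
    have "P $ n = (-1) ^ k * (fps_const (1 / fact k) * phi f 0 ^ k) $ n"
      by (simp add: P_def)
    also have "\<dots> = (-1) ^ k * (if k \<le> n then bellB n k (\<lambda>i. f i 0) / fact n else 0)"
      by (simp only: bellB_div_fact_eq_nth[of f k n, OF assms])
    finally show ?thesis
      by simp
  qed
  then have "?terms = (\<lambda>n. fps_const (P $ n) * A * fps_X ^ n)"
    by auto
  then show ?thesis
    using sums_fps_const_nth_mult[of P A] by (simp add: P_def mult_ac)
qed

theorem mainTheorem2:
  fixes f :: "nat \<Rightarrow> nat \<Rightarrow> 'a::field_char_0"
  assumes "f 0 0 = 0" and "f 0 1 \<noteq> 0"
  shows "(\<exists>!y. fps_nth y 0 = 0 \<and> subst2 f y = 0) \<and>
         (\<forall>y. fps_nth y 0 = 0 \<and> subst2 f y = 0 \<longrightarrow>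
            (\<lambda>j. let k = j + 1 in
                 fps_const ((-1) ^ k / fact k) * A1 k (\<lambda>i. phi f i) * phi f 0 ^ k) sums y
          \<and> (\<forall>k\<ge>1. summable (\<lambda>n. if k \<le> n then
                 fps_const ((-1) ^ k * bellB n k (\<lambda>i. f i 0) / fact n) *
                 A1 k (\<lambda>i. phi f i) * fps_X ^ n else 0))
          \<and> (\<lambda>j. let k = j + 1 in
                 (\<Sum>n. if k \<le> n then
                    fps_const ((-1) ^ k * bellB n k (\<lambda>i. f i 0) / fact n) *
                    A1 k (\<lambda>i. phi f i) * fps_X ^ n else 0)) sums y)"
proof -
  define Y where "Y = fps_eval (A1_series (phi f)) (- phi f 0)"
  have p00: "phi f 0 $ 0 = 0"
    using assms(1) by (simp add: phi_def)
  have Y0: "Y $ 0 = 0"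
    unfolding Y_def by (rule fps_eval_nth_0) (simp add: A1_series_def)
  have solution: "subst2 f Y = 0"
    unfolding Y_def using assms by (rule subst2_fps_eval_A1_series)
  have unique: "y = Y" if "y $ 0 = 0" and "subst2 f y = 0" for y
    using subst2_inj[of f, OF assms(2) that(1) Y0] that(2) solution by simp
  have A1_sums: "(\<lambda>j. let k = j + 1 in
      fps_const ((-1) ^ k / fact k) * A1 k (phi f) * phi f 0 ^ k) sums Y"
    unfolding Y_def by (rule fps_eval_A1_series_sums[OF p00])
  note bell_sums = bellB_series_sums[of f, OF assms(1)]
  have bell_suminf: "(\<lambda>j. let k = j + 1 in (\<Sum>n. if k \<le> n then
      fps_const ((-1) ^ k * bellB n k (\<lambda>i. f i 0) / fact n) * A1 k (phi f) * fps_X ^ n else 0))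
    = (\<lambda>j. let k = j + 1 in fps_const ((-1) ^ k / fact k) * A1 k (phi f) * phi f 0 ^ k)"
    by (simp only: Let_def sums_unique[OF bell_sums, symmetric])
  show ?thesis
    unfolding bell_suminf using Y0 solution unique A1_sums sums_summable[OF bell_sums] by blast
qed

end
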